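(* For nonnegative integers $a_1$: $G(a_1,0,0)=0$ if $a_1$ is odd and $G(a_1,0,0)=1$ if $a_1$ is even; $G(a_1,0,a_1)=1$ for all $a_1$; $G(a_1,1,0)=a_1/2$ for even $a_1$; and $G(a_1,2,0)=\big((a_1+1)/2\big)^2$ for odd $a_1$.
   Context: For integers $a_1,a_2,s$ with $a=a_1+a_2$, $G(a_1,a_2,s)=\sum_m N_m$, the sum over integers $m$ such that $a_1-m,\ a_2-(s-m),\ m,\ s-m$ are all nonnegative (an empty sum is $0$), where $N_m$ is the number of permutations $\pi$ of $[a]$ that are decreasing within each of four consecutive blocks of positions of lengths $a_1-m,\ a_2-(s-m),\ m,\ s-m$ (in this order; arbitrary between blocks), and have no fixed point ($\pi_i=i$) in the first two blocks. *)

theory Defs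
  imports "HOL-Combinatorics.Permutations"
begin

definition dec_on :: "(nat \<Rightarrow> nat) \<Rightarrow> nat set \<Rightarrow> bool" where
  "dec_on p B = (\<forall>i\<in>B. \<forall>j\<in>B. i < j \<longrightarrow> p j < p i)"

definition Nblocks :: "nat \<Rightarrow> nat \<Rightarrow> nat \<Rightarrow> nat \<Rightarrow> nat" where
  "Nblocks l1 l2 l3 l4 = card {p. p permutes {1..l1+l2+l3+l4}
      \<and> dec_on p {1..l1}
      \<and> dec_on p {l1+1..l1+l2}
      \<and> dec_on p {l1+l2+1..l1+l2+l3}
      \<and> dec_on p {l1+l2+l3+1..l1+l2+l3+l4}
      \<and> (\<forall>i\<in>{1..l1+l2}. p i \<noteq> i)}"

definition G :: "int \<Rightarrow> int \<Rightarrow> int \<Rightarrow> int" where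
  "G a1 a2 s = (\<Sum>m\<in>{m::int. 0 \<le> a1 - m \<and> 0 \<le> a2 - (s - m) \<and> 0 \<le> m \<and> 0 \<le> s - m}.
      int (Nblocks (nat (a1 - m)) (nat (a2 - (s - m))) (nat m) (nat (s - m))))"

end

theory Submission
  imports Defs
begin

text \<open>If a permutation p of {1..n} is decreasing on the block {1..k}, then the values above p i
  (for i in the block) are taken exactly by the i - 1 earlier block positions and by the positions
  j > k with p j > p i, so n - p i = (i - 1) + #{j > k. p i < p j}. Hence p is determined by its
  values on {k+1..n}. For k = n this forces the reversal i \<mapsto> n + 1 - i, which is fixed-point
  free iff n is even; for one or two positions after the block the permutation is an explicit
  piecewise-linear map, and the absence of fixed points becomes an interval condition on the
  values p (k+1), p (k+2), which are then simply counted.\<close>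

lemma inj_on_endo_permutes:
  assumes "finite S" "inj_on p S" "p ` S \<subseteq> S" "\<And>x. x \<notin> S \<Longrightarrow> p x = x"
  shows "p permutes S"
  using assms by (intro bij_imp_permutes) (auto simp: bij_betw_def endo_inj_surj)

lemma dec_on_empty [simp]: "dec_on p {}"
  and dec_on_singleton [simp]: "dec_on p {a}"
  by (simp_all add: dec_on_def)

lemma Nblocks_two_blocks:
  "Nblocks k l 0 0 = card {p. p permutes {1..k+l} \<and> dec_on p {1..k} \<and> dec_on p {k+1..k+l}
      \<and> (\<forall>i\<in>{1..k+l}. p i \<noteq> i)}"
  by (simp add: Nblocks_def)

lemma permutes_dec_on_value:
  assumes perm: "p permutes {1..n}" and dec: "dec_on p {1..k}" and "k \<le> n" and i: "i \<in> {1..k}"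
  shows "n - p i = (i - 1) + (\<Sum>j\<in>{k+1..n}. if p i < p j then 1 else 0)"
proof -
  have "p i \<in> {1..n}" using i \<open>k \<le> n\<close> permutes_in_image[OF perm] by auto
  have "p i < p j \<longleftrightarrow> j < i" if "j \<in> {1..k}" for j
    using dec i that unfolding dec_on_def by (metis less_asym linorder_neqE_nat)
  then have "{j\<in>{1..k}. p i < p j} = {1..<i}"
    using i by auto
  moreover have "{j\<in>{1..n}. p i < p j} = {j\<in>{1..k}. p i < p j} \<union> {j\<in>{k+1..n}. p i < p j}"
    using \<open>k \<le> n\<close> by auto
  ultimately have split: "{j\<in>{1..n}. p i < p j} = {1..<i} \<union> {j\<in>{k+1..n}. p i < p j}"
    by simp
  have "p ` {j\<in>{1..n}. p i < p j} = {v\<in>p ` {1..n}. p i < v}" by blast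
  also have "\<dots> = {p i<..n}"
    using \<open>p i \<in> {1..n}\<close> permutes_image[OF perm] by auto
  finally have "n - p i = card (p ` {j\<in>{1..n}. p i < p j})" by simp
  also have "\<dots> = card {j\<in>{1..n}. p i < p j}"
    using permutes_inj_on[OF perm] by (intro card_image) (auto intro: inj_on_subset)
  also have "\<dots> = (i - 1) + card {j\<in>{k+1..n}. p i < p j}"
    unfolding split using i by (subst card_Un_disjoint) auto
  finally show ?thesis by (simp add: sum.inter_filter[symmetric])
qed

definition rev_perm :: "nat \<Rightarrow> nat \<Rightarrow> nat" where
  "rev_perm n i = (if i \<in> {1..n} then n + 1 - i else i)"

lemma rev_perm_permutes: "rev_perm n permutes {1..n}"
  by (rule inj_on_endo_permutes) (auto simp: rev_perm_def inj_on_def)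

lemma dec_on_rev_perm: "dec_on (rev_perm n) {1..n}"
  by (auto simp: rev_perm_def dec_on_def)

lemma permutes_dec_on_iff_rev_perm:
  "p permutes {1..n} \<and> dec_on p {1..n} \<longleftrightarrow> p = rev_perm n"
proof (intro iffI ext)
  fix i assume p: "p permutes {1..n} \<and> dec_on p {1..n}"
  show "p i = rev_perm n i"
  proof (cases "i \<in> {1..n}")
    case True
    then have "n - p i = i - 1" and "p i \<in> {1..n}"
      using permutes_dec_on_value[of p n n i] permutes_in_image[of p "{1..n}" i] p by auto
    with True show ?thesis by (auto simp: rev_perm_def)
  next
    case False
    then show ?thesis using p permutes_not_in by (fastforce simp: rev_perm_def)
  qed
qed (use rev_perm_permutes dec_on_rev_perm in blast)

lemma rev_perm_has_fixpoint_iff: "(\<exists>i\<in>{1..n}. rev_perm n i = i) \<longleftrightarrow> odd n"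
proof
  assume "\<exists>i\<in>{1..n}. rev_perm n i = i"
  then obtain i where "i \<in> {1..n}" "n + 1 - i = i" by (auto simp: rev_perm_def)
  then show "odd n" by presburger
next
  assume "odd n"
  then have "(n + 1) div 2 \<in> {1..n}" "rev_perm n ((n + 1) div 2) = (n + 1) div 2"
    by (auto simp: rev_perm_def) presburger+
  then show "\<exists>i\<in>{1..n}. rev_perm n i = i" by blast
qed

lemma Nblocks_first_block: "Nblocks n 0 0 0 = (if even n then 1 else 0)"
proof -
  have "{p. p permutes {1..n} \<and> dec_on p {1..n} \<and> (\<forall>i\<in>{1..n}. p i \<noteq> i)}
      = {p. p = rev_perm n \<and> \<not> (\<exists>i\<in>{1..n}. p i = i)}"
    using permutes_dec_on_iff_rev_perm by blast
  also have "\<dots> = (if even n then {rev_perm n} else {})"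
    using rev_perm_has_fixpoint_iff[of n] by auto
  finally show ?thesis by (simp add: Nblocks_two_blocks[of n 0])
qed

lemma Nblocks_third_block: "Nblocks 0 0 n 0 = 1"
  using permutes_dec_on_iff_rev_perm[of _ n] by (simp add: Nblocks_def dec_on_def)

text \<open>The permutation of {1..k+1} that sends k + 1 to x and is decreasing on {1..k}; the block
  runs through {1..k+1} - {x} downwards, jumping over x.\<close>
definition dec_tail1 :: "nat \<Rightarrow> nat \<Rightarrow> nat \<Rightarrow> nat" where
  "dec_tail1 k x i =
    (if i \<in> {1..k} then (if i + x \<le> k + 1 then k + 2 - i else k + 1 - i)
     else if i = k + 1 then x else i)"

lemma dec_tail1_permutes:
  assumes "x \<in> {1..k+1}"
  shows "dec_tail1 k x permutes {1..k+1}"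
proof (rule inj_on_endo_permutes)
  show "inj_on (dec_tail1 k x) {1..k+1}"
    using assms by (auto simp: inj_on_def dec_tail1_def split: if_splits)
  show "dec_tail1 k x ` {1..k+1} \<subseteq> {1..k+1}"
    using assms by (auto simp: dec_tail1_def)
qed (auto simp: dec_tail1_def)

lemma dec_on_dec_tail1: "dec_on (dec_tail1 k x) {1..k}"
  by (auto simp: dec_tail1_def dec_on_def)

lemma permutes_dec_on_eq_dec_tail1:
  assumes perm: "p permutes {1..k+1}" and dec: "dec_on p {1..k}"
  shows "p = dec_tail1 k (p (k+1))"
proof
  fix i
  let ?x = "p (k+1)"
  have x: "?x \<in> {1..k+1}" using permutes_in_image[OF perm] by simp
  show "p i = dec_tail1 k ?x i"
  proof (cases "i \<in> {1..k}")
    case True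
    have "k + 1 - p i = (i - 1) + (if p i < ?x then 1 else 0)"
      using permutes_dec_on_value[OF perm dec _ True] by simp
    moreover have "p i \<noteq> ?x"
    proof
      assume "p i = ?x"
      then have "i = k + 1" by (rule injD[OF permutes_inj[OF perm]])
      with True show False by simp
    qed
    moreover have "p i \<in> {1..k+1}"
      using True permutes_in_image[OF perm] by simp
    ultimately show ?thesis using True x by (auto simp: dec_tail1_def split: if_splits)
  next
    case False
    then show ?thesis using permutes_not_in[OF perm] by (auto simp: dec_tail1_def)
  qed
qed

lemma dec_tail1_derangement_iff:
  assumes "k = 2 * h" and "x \<in> {1..k+1}"
  shows "(\<forall>i\<in>{1..k+1}. dec_tail1 k x i \<noteq> i) \<longleftrightarrow> x \<in> {h+1..k}"
proof
  assume der: "\<forall>i\<in>{1..k+1}. dec_tail1 k x i \<noteq> i"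
  then have "dec_tail1 k x (k+1) \<noteq> k + 1" by simp
  then have "x \<noteq> k + 1" by (simp add: dec_tail1_def)
  moreover have "\<not> x \<le> h"
  proof
    assume "x \<le> h"
    then have "dec_tail1 k x (h+1) = h + 1" and "h \<ge> 1"
      using assms by (auto simp: dec_tail1_def)
    with der assms show False by auto
  qed
  ultimately show "x \<in> {h+1..k}" using assms by auto
next
  assume x: "x \<in> {h+1..k}"
  show "\<forall>i\<in>{1..k+1}. dec_tail1 k x i \<noteq> i"
  proof
    fix i assume i: "i \<in> {1..k+1}"
    show "dec_tail1 k x i \<noteq> i"
    proof (cases "i \<le> k")
      case True
      then have "dec_tail1 k x i = (if i + x \<le> k + 1 then k + 2 - i else k + 1 - i)"
        using i by (simp add: dec_tail1_def)
      moreover have "k + 1 - i \<noteq> i" using assms(1) by presburger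
      moreover have "k + 2 - i \<noteq> i" if "i + x \<le> k + 1"
        using that x assms(1) by auto
      ultimately show ?thesis by simp
    next
      case False
      with i x show ?thesis by (simp add: dec_tail1_def)
    qed
  qed
qed

lemma Nblocks_second_block_singleton:
  assumes "k = 2 * h"
  shows "Nblocks k 1 0 0 = h"
proof -
  let ?S = "{p. p permutes {1..k+1} \<and> dec_on p {1..k} \<and> (\<forall>i\<in>{1..k+1}. p i \<noteq> i)}"
  have "Nblocks k 1 0 0 = card ?S"
    unfolding Nblocks_two_blocks[of k 1] by simp
  also have "?S = dec_tail1 k ` {h+1..k}"
  proof (intro equalityI subsetI)
    fix p assume "p \<in> ?S"
    then have perm: "p permutes {1..k+1}" and "dec_on p {1..k}" and der: "\<forall>i\<in>{1..k+1}. p i \<noteq> i"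
      by auto
    define x where "x = p (k+1)"
    have "p = dec_tail1 k x"
      unfolding x_def by (rule permutes_dec_on_eq_dec_tail1[OF perm \<open>dec_on p {1..k}\<close>])
    moreover have "x \<in> {1..k+1}"
      using permutes_in_image[OF perm] by (simp add: x_def)
    ultimately have "x \<in> {h+1..k}"
      using der dec_tail1_derangement_iff[OF assms] by simp
    with \<open>p = dec_tail1 k x\<close> show "p \<in> dec_tail1 k ` {h+1..k}" by blast
  next
    fix p assume "p \<in> dec_tail1 k ` {h+1..k}"
    then obtain x where x: "x \<in> {h+1..k}" and p: "p = dec_tail1 k x" by blast
    then have "x \<in> {1..k+1}" using assms by auto
    with x show "p \<in> ?S"
      unfolding p using dec_tail1_permutes dec_on_dec_tail1 dec_tail1_derangement_iff[OF assms]
      by blast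
  qed
  also have "card (dec_tail1 k ` {h+1..k}) = card {h+1..k}"
    by (rule card_image, rule inj_onI) (drule fun_cong[of _ _ "k+1"], simp add: dec_tail1_def)
  finally show ?thesis using assms by simp
qed

text \<open>Likewise for two positions after the block, sending k + 1 to x and k + 2 to y < x.\<close>
definition dec_tail2 :: "nat \<Rightarrow> nat \<Rightarrow> nat \<Rightarrow> nat \<Rightarrow> nat" where
  "dec_tail2 k x y i =
    (if i \<in> {1..k} then
       (if i + x \<le> k + 2 then k + 3 - i else if i + y \<le> k + 1 then k + 2 - i else k + 1 - i)
     else if i = k + 1 then x else if i = k + 2 then y else i)"

lemma dec_tail2_permutes:
  assumes "x \<in> {1..k+2}" "y \<in> {1..k+2}" "y < x"
  shows "dec_tail2 k x y permutes {1..k+2}"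
proof (rule inj_on_endo_permutes)
  show "inj_on (dec_tail2 k x y) {1..k+2}"
    using assms by (auto simp: inj_on_def dec_tail2_def split: if_splits)
  show "dec_tail2 k x y ` {1..k+2} \<subseteq> {1..k+2}"
    using assms by (auto simp: dec_tail2_def)
qed (auto simp: dec_tail2_def)

lemma dec_on_dec_tail2: "dec_on (dec_tail2 k x y) {1..k}"
  by (auto simp: dec_tail2_def dec_on_def)

lemma permutes_dec_on_eq_dec_tail2:
  assumes perm: "p permutes {1..k+2}" and dec: "dec_on p {1..k}" and "p (k+2) < p (k+1)"
  shows "p = dec_tail2 k (p (k+1)) (p (k+2))"
proof
  fix i
  let ?x = "p (k+1)" and ?y = "p (k+2)"
  have x: "?x \<in> {1..k+2}" and y: "?y \<in> {1..k+2}" using permutes_in_image[OF perm] by simp_all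
  show "p i = dec_tail2 k ?x ?y i"
  proof (cases "i \<in> {1..k}")
    case True
    have "{k+1..k+2} = {k+1, k+2}" by auto
    then have "k + 2 - p i = (i - 1) + (if p i < ?x then 1 else 0) + (if p i < ?y then 1 else 0)"
      using permutes_dec_on_value[OF perm dec _ True] by simp
    moreover have "p i \<noteq> ?x" "p i \<noteq> ?y"
      using True injD[OF permutes_inj[OF perm], of i] by fastforce+
    moreover have "p i \<in> {1..k+2}"
      using True permutes_in_image[OF perm] by simp
    ultimately show ?thesis
      using True x y \<open>?y < ?x\<close> by (auto simp: dec_tail2_def split: if_splits)
  next
    case False
    then show ?thesis using permutes_not_in[OF perm] by (auto simp: dec_tail2_def)
  qed
qed


lemma dec_tail2_derangement_iff:
  assumes k: "k + 1 = 2 * h" and "x \<in> {1..k+2}" "y \<in> {1..k+2}" "y < x"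
  shows "(\<forall>i\<in>{1..k+2}. dec_tail2 k x y i \<noteq> i) \<longleftrightarrow> x \<in> {h+1..k+2} - {k+1} \<and> y \<in> {1..h}"
proof
  assume der: "\<forall>i\<in>{1..k+2}. dec_tail2 k x y i \<noteq> i"
  then have "dec_tail2 k x y (k+1) \<noteq> k + 1" by simp
  then have "x \<noteq> k + 1" by (simp add: dec_tail2_def)
  moreover have "\<not> x \<le> h"
  proof
    assume "x \<le> h"
    then have "dec_tail2 k x y (h+1) = h + 1" and "h + 1 \<le> k"
      using assms by (auto simp: dec_tail2_def)
    with der show False by auto
  qed
  moreover have "\<not> h < y"
  proof
    assume "h < y"
    then have "dec_tail2 k x y h = h" and "1 \<le> h" "h \<le> k"
      using assms by (auto simp: dec_tail2_def)
    with der show False by auto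
  qed
  ultimately show "x \<in> {h+1..k+2} - {k+1} \<and> y \<in> {1..h}" using assms by auto
next
  assume xy: "x \<in> {h+1..k+2} - {k+1} \<and> y \<in> {1..h}"
  show "\<forall>i\<in>{1..k+2}. dec_tail2 k x y i \<noteq> i"
  proof
    fix i assume i: "i \<in> {1..k+2}"
    show "dec_tail2 k x y i \<noteq> i"
    proof (cases "i \<le> k")
      case True
      then have "dec_tail2 k x y i = (if i + x \<le> k + 2 then k + 3 - i
          else if i + y \<le> k + 1 then k + 2 - i else k + 1 - i)"
        using i by (simp add: dec_tail2_def)
      moreover have "k + 2 - i \<noteq> i" using k by presburger
      moreover have "k + 3 - i \<noteq> i" if "i + x \<le> k + 2"
        using that xy k by auto
      moreover have "k + 1 - i \<noteq> i" if "\<not> i + y \<le> k + 1"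
        using that xy k by auto
      ultimately show ?thesis by simp
    next
      case False
      with i xy k show ?thesis by (auto simp: dec_tail2_def)
    qed
  qed
qed

lemma Nblocks_second_block_pair:
  assumes k: "k + 1 = 2 * h"
  shows "Nblocks k 2 0 0 = h * h"
proof -
  let ?S = "{p. p permutes {1..k+2} \<and> dec_on p {1..k} \<and> dec_on p {k+1..k+2}
      \<and> (\<forall>i\<in>{1..k+2}. p i \<noteq> i)}"
  let ?f = "\<lambda>(x, y). dec_tail2 k x y" and ?T = "({h+1..k+2} - {k+1}) \<times> {1..h}"
  have dec_on_last: "dec_on q {k+1..k+2} \<longleftrightarrow> q (k+2) < q (k+1)" for q
    by (auto simp: dec_on_def le_Suc_eq)
  have "?S = ?f ` ?T"
  proof (intro equalityI subsetI)
    fix p assume "p \<in> ?S"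
    then have perm: "p permutes {1..k+2}" and "dec_on p {1..k}" "p (k+2) < p (k+1)"
      and der: "\<forall>i\<in>{1..k+2}. p i \<noteq> i"
      unfolding dec_on_last by auto
    define x y where "x = p (k+1)" and "y = p (k+2)"
    have "p = dec_tail2 k x y"
      unfolding x_def y_def by (rule permutes_dec_on_eq_dec_tail2) fact+
    moreover have "x \<in> {1..k+2}" "y \<in> {1..k+2}" "y < x"
      using permutes_in_image[OF perm, of "k+1"] permutes_in_image[OF perm, of "k+2"]
        \<open>p (k+2) < p (k+1)\<close>
      by (simp_all add: x_def y_def)
    ultimately have "(x, y) \<in> ?T"
      using der dec_tail2_derangement_iff[OF k] by simp
    with \<open>p = dec_tail2 k x y\<close> show "p \<in> ?f ` ?T" by force
  next
    fix p assume "p \<in> ?f ` ?T"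
    then obtain x y where xy: "(x, y) \<in> ?T" and p: "p = dec_tail2 k x y"
      by (elim imageE) (simp split: prod.splits)
    then have "x \<in> {1..k+2}" "y \<in> {1..k+2}" "y < x" using k by auto
    with xy show "p \<in> ?S"
      unfolding p dec_on_last
      using dec_tail2_permutes dec_on_dec_tail2 dec_tail2_derangement_iff[OF k]
      by (auto simp: dec_tail2_def)
  qed
  moreover have "inj ?f"
  proof (rule injI, clarify)
    fix x y x' y' assume "dec_tail2 k x y = dec_tail2 k x' y'"
    then have "dec_tail2 k x y (k+1) = dec_tail2 k x' y' (k+1)"
      and "dec_tail2 k x y (k+2) = dec_tail2 k x' y' (k+2)" by simp_all
    then show "x = x' \<and> y = y'" by (simp add: dec_tail2_def)
  qed
  moreover have "card ({h+1..k+2} - {k+1}) = h"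
    using k by (subst card_Diff_singleton) auto
  ultimately show ?thesis
    by (simp add: Nblocks_two_blocks card_image inj_on_subset card_cartesian_product)
qed

lemma G_s_zero:
  assumes "0 \<le> a1" "0 \<le> a2"
  shows "G a1 a2 0 = int (Nblocks (nat a1) (nat a2) 0 0)"
proof -
  have "{m::int. 0 \<le> a1 - m \<and> 0 \<le> a2 - (0 - m) \<and> 0 \<le> m \<and> 0 \<le> 0 - m} = {0}"
    using assms by auto
  then show ?thesis by (simp add: G_def)
qed

lemma G_diagonal:
  assumes "0 \<le> a1"
  shows "G a1 0 a1 = int (Nblocks 0 0 (nat a1) 0)"
proof -
  have "{m::int. 0 \<le> a1 - m \<and> 0 \<le> 0 - (a1 - m) \<and> 0 \<le> m \<and> 0 \<le> a1 - m} = {a1}"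
    using assms by auto
  then show ?thesis by (simp add: G_def)
qed

theorem mainTheorem13:
  fixes a1 :: int
  assumes "0 \<le> a1"
  shows "(odd a1 \<longrightarrow> G a1 0 0 = 0)
    \<and> (even a1 \<longrightarrow> G a1 0 0 = 1)
    \<and> G a1 0 a1 = 1
    \<and> (even a1 \<longrightarrow> 2 * G a1 1 0 = a1)
    \<and> (odd a1 \<longrightarrow> 4 * G a1 2 0 = (a1 + 1)^2)"
proof -
  obtain n where a1: "a1 = int n" using assms nonneg_eq_int by blast
  have G00: "G a1 0 0 = (if even n then 1 else 0)"
    using G_s_zero[of a1 0] Nblocks_first_block by (simp add: a1)
  have "even n \<Longrightarrow> 2 * G a1 1 0 = a1"
    using G_s_zero[of a1 1] Nblocks_second_block_singleton by (auto simp: a1 elim!: evenE)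
  moreover have "4 * G a1 2 0 = (a1 + 1)^2" if "odd n"
  proof -
    from that obtain h where h: "n + 1 = 2 * h" by (metis even_Suc Suc_eq_plus1 evenE)
    then have "a1 + 1 = 2 * int h" unfolding a1 by linarith
    then show ?thesis
      using G_s_zero[of a1 2] Nblocks_second_block_pair[OF h] by (simp add: a1 power2_eq_square)
  qed
  ultimately show ?thesis
    using G00 G_diagonal[OF assms] Nblocks_third_block by (simp add: a1)
qed

end
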